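(* Let $p$ be a prime and $\alpha\geqslant 2$ an integer. For $\beta\in\mathbb{N}$, $l,n\in\mathbb{N}$ and $r\in\mathbb{Z}$ put $$T_{l,\beta}^{(p)}(n,r)=\frac{l!\,p^l}{\lfloor n/p^{\beta-1}\rfloor!}\sum_{k\equiv r\ (\mathrm{mod}\ p^{\beta})}\binom nk(-1)^k\binom{(k-r)/p^{\beta}}l.$$ Then for all $l,n\in\mathbb{N}$ and $r\in\mathbb{Z}$, $$T_{l,\alpha+1}^{(p)}(n,r)\equiv(-1)^{\{r\}_p}\binom{\{n\}_p}{\{r\}_p}T_{l,\alpha}^{(p)}\Big(\Big\lfloor\frac np\Big\rfloor,\Big\lfloor\frac rp\Big\rfloor\Big)\pmod p.$$
   Context: The sum runs over all integers $k\equiv r\pmod{p^\beta}$, with $\binom nk=0$ unless $0\le k\le n$; $\binom xl=x(x-1)\cdots(x-l+1)/l!$ for any $x$. For an integer $a$ and positive integer $m$, $\{a\}_m$ is the least nonnegative residue of $a$ modulo $m$. For rationals (or elements of $\mathbb{Q}_p$) $u,v$, $u\equiv v\pmod{p^a}$ means $\operatorname{ord}_p(u-v)\ge a$. *)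

theory Defs
  imports "HOL-Computational_Algebra.Computational_Algebra"
begin

text \<open>Congruence of rationals modulo p^a: ord_p(u - v) \<ge> a, i.e. u - v = x/y with
  y not divisible by p and p^a dividing x.\<close>
definition qcong :: "rat \<Rightarrow> rat \<Rightarrow> nat \<Rightarrow> nat \<Rightarrow> bool" where
  "qcong u v p a \<longleftrightarrow>
     (\<exists>x y :: int. y \<noteq> 0 \<and> \<not> int p dvd y \<and> int p ^ a dvd x \<and> u - v = of_int x / of_int y)"

text \<open>T_{l,beta}^{(p)}(n,r). The sum over all integers k \<equiv> r (mod p^beta) reduces to
  0 \<le> k \<le> n since binom n k = 0 otherwise; (k - r)/p^beta is then an integer.\<close>
definition T :: "nat \<Rightarrow> nat \<Rightarrow> nat \<Rightarrow> nat \<Rightarrow> int \<Rightarrow> rat" where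
  "T p l \<beta> n r =
     (of_nat (fact l) * of_nat p ^ l / of_nat (fact (n div p ^ (\<beta> - 1)))) *
     (\<Sum>k \<in> {k. k \<le> n \<and> int k mod int p ^ \<beta> = r mod int p ^ \<beta>}.
        of_nat (n choose k) * (-1) ^ k * ((of_int ((int k - r) div int p ^ \<beta>) :: rat) gchoose l))"

end

theory Submission
  imports Defs
begin

text \<open>
  Let E be the shift operator (E f) x = f (x + 1) on functions from the integers, and let
  F_(beta,r) x = l! p^l binom((x - r)/p^beta, l) if p^beta divides x - r, and 0 otherwise. T_(l,beta)(n,r) is then ((1 - E)^n F_(beta,r)) 0.

  Write n = n0 + p m with n0 < p. Since (1 - E)^p = (1 - E^p) + Q(E) with all coefficients of
  Q divisible by p, (1 - E)^(p m) expands binomially into the terms binom(m,j) Q(E)^j (1 - E^p)^(m-j),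
  and (1 - E^p)^(m-j) acts on F_(beta+1,s) as (1 - E)^(m-j) acts on F_(beta,(s-x)/p).
  Provided T_(l,beta) is p-integral, the term of index j \<ge> 1 is divisible by
  p^(j + v_p(binom(m,j)) + v_p(floor((m-j)/p^(beta-1))!)), which exceeds v_p(floor(m/p^(beta-1))!)
  by Legendre's formula. So after division by floor(m/p^(beta-1))! only the term j = 0 survives
  modulo p, and (1 - E)^n0 then selects the single shift i = r mod p with p dividing r - i,
  producing the factor (-1)^r0 binom(n0,r0).

  The p-integrality of T_(l,beta) follows from the same congruence by induction on beta. For
  beta = 1 an induction on l, using k binom(M,k) = M binom(M-1,k-1), reduces it to Fleck's congruence:
  p^floor((M-1)/(p-1)) divides the sum of (-1)^k binom(M,k) over k congruent to t modulo p,
  and v_p(M!) \<le> (M-1)/(p-1).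
\<close>

section \<open>Polynomials in the shift operator\<close>

definition shift_apply :: "'a::comm_ring_1 poly \<Rightarrow> (int \<Rightarrow> 'a) \<Rightarrow> int \<Rightarrow> 'a" where
  "shift_apply P f x = (\<Sum>i\<le>degree P. coeff P i * f (x + int i))"

lemma shift_apply_eq_sum:
  assumes "degree P \<le> N"
  shows "shift_apply P f x = (\<Sum>i\<le>N. coeff P i * f (x + int i))"
  unfolding shift_apply_def using assms
  by (intro sum.mono_neutral_left) (auto simp: coeff_eq_0)

lemma shift_apply_0 [simp]: "shift_apply 0 f x = 0"
  by (simp add: shift_apply_def)

lemma shift_apply_1 [simp]: "shift_apply 1 f x = f x"
  by (simp add: shift_apply_def)

lemma shift_apply_add: "shift_apply (P + Q) f x = shift_apply P f x + shift_apply Q f x"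
proof -
  have "degree (P + Q) \<le> max (degree P) (degree Q)"
    by (rule degree_add_le_max)
  then show ?thesis
    by (simp add: shift_apply_eq_sum[of _ "max (degree P) (degree Q)"] sum.distrib algebra_simps)
qed

lemma shift_apply_smult: "shift_apply (smult a P) f x = a * shift_apply P f x"
proof -
  have "shift_apply (smult a P) f x = (\<Sum>i\<le>degree P. coeff (smult a P) i * f (x + int i))"
    by (rule shift_apply_eq_sum) (rule degree_smult_le)
  then show ?thesis
    by (simp add: shift_apply_def sum_distrib_left algebra_simps)
qed

lemma shift_apply_pCons: "shift_apply (pCons a P) f x = a * f x + shift_apply P f (x + 1)"
proof -
  have "shift_apply (pCons a P) f x = (\<Sum>i\<le>Suc (degree P). coeff (pCons a P) i * f (x + int i))"
    by (rule shift_apply_eq_sum) simp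
  also have "\<dots> = a * f x + shift_apply P f (x + 1)"
    by (subst sum.atMost_Suc_shift) (simp add: shift_apply_def algebra_simps)
  finally show ?thesis .
qed

lemma shift_apply_mult: "shift_apply (P * Q) f x = shift_apply P (shift_apply Q f) x"
proof (induction P arbitrary: x)
  case (pCons a P)
  then show ?case
    by (simp add: shift_apply_add shift_apply_smult shift_apply_pCons)
qed simp

lemma shift_apply_sum: "shift_apply (\<Sum>i\<in>S. P i) f x = (\<Sum>i\<in>S. shift_apply (P i) f x)"
  by (induction S rule: infinite_finite_induct) (simp_all add: shift_apply_add)

lemma shift_apply_monom: "shift_apply (monom a k) f x = a * f (x + int k)"
proof -
  have "shift_apply (monom a k) f x = (\<Sum>i\<le>k. coeff (monom a k) i * f (x + int i))"
    by (rule shift_apply_eq_sum) (rule degree_monom_le)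
  also have "\<dots> = (\<Sum>i\<le>k. if i = k then a * f (x + int k) else 0)"
    by (intro sum.cong) (auto simp: coeff_monom)
  finally show ?thesis
    by simp
qed

lemma shift_apply_translate: "shift_apply P f (x + y) = shift_apply P (\<lambda>z. f (z + y)) x"
  by (simp add: shift_apply_def algebra_simps)

lemma shift_apply_dvd:
  assumes "\<And>i. c dvd coeff P i" and "\<And>y. d dvd f y"
  shows "c * d dvd shift_apply P f x"
  unfolding shift_apply_def using assms by (intro dvd_sum mult_dvd_mono) auto

lemma one_minus_monom_power:
  "(1 - monom 1 q) ^ M = (\<Sum>k\<le>M. monom (of_nat (M choose k) * (-1) ^ k :: 'a::comm_ring_1) (q * k))"
proof -
  have "(1 - monom (1::'a) q) ^ M = (monom (-1) q + 1) ^ M"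
    by (simp add: minus_monom[symmetric])
  also have "\<dots> = (\<Sum>k\<le>M. of_nat (M choose k) * monom (-1) q ^ k * 1 ^ (M - k))"
    by (rule binomial_ring)
  also have "\<dots> = (\<Sum>k\<le>M. monom (of_nat (M choose k) * (-1) ^ k) (q * k))"
    by (intro sum.cong refl) (simp add: monom_power of_nat_poly smult_monom mult.commute)
  finally show ?thesis .
qed

lemma coeff_one_minus_X_power:
  "coeff ((1 - monom 1 1) ^ M) i = (of_nat (M choose i) * (-1) ^ i :: 'a::comm_ring_1)"
  by (simp add: one_minus_monom_power coeff_sum coeff_monom sum.delta binomial_eq_0)

lemma shift_apply_one_minus_monom_power:
  "shift_apply ((1 - monom 1 q) ^ M) f x = (\<Sum>k\<le>M. of_nat (M choose k) * (-1) ^ k * f (x + int (q * k)))"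
  by (simp add: one_minus_monom_power shift_apply_sum shift_apply_monom)

lemma coeff_power_dvd:
  fixes P :: "'a::comm_semiring_1 poly"
  assumes "\<And>i. c dvd coeff P i"
  shows "c ^ j dvd coeff (P ^ j) i"
proof (induction j arbitrary: i)
  case (Suc j)
  show ?case
    unfolding power_Suc coeff_mult by (intro dvd_sum mult_dvd_mono assms Suc.IH)
qed simp

lemma sum_binomial_times_index:
  "(\<Sum>k\<le>Suc M. of_nat (Suc M choose k) * (-1) ^ k * of_nat k * g k)
     = - of_nat (Suc M) * (\<Sum>k\<le>M. of_nat (M choose k) * (-1) ^ k * g (Suc k) :: 'a::comm_ring_1)"
proof -
  have "of_nat (Suc M choose Suc k) * (-1) ^ Suc k * of_nat (Suc k) * g (Suc k)
          = - of_nat (Suc M) * (of_nat (M choose k) * (-1) ^ k * g (Suc k) :: 'a)" for k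
  proof -
    have e: "of_nat (Suc M choose Suc k) * of_nat (Suc k) = (of_nat (Suc M) * of_nat (M choose k) :: 'a)"
      using Suc_times_binomial[of k M] by (metis of_nat_mult mult.commute)
    have "of_nat (Suc M choose Suc k) * (-1) ^ Suc k * of_nat (Suc k) * g (Suc k)
            = - (of_nat (Suc M choose Suc k) * of_nat (Suc k)) * ((-1) ^ k * g (Suc k) :: 'a)"
      by (simp del: binomial_Suc_Suc of_nat_Suc add: ac_simps)
    also have "\<dots> = - of_nat (Suc M) * (of_nat (M choose k) * (-1) ^ k * g (Suc k))"
      by (simp only: e) (simp del: of_nat_Suc add: algebra_simps)
    finally show ?thesis .
  qed
  then show ?thesis
    by (simp only: sum.atMost_Suc_shift sum_distrib_left) simp
qed

lemma int_dvd_diff_iff_eq_mod: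
  fixes p i :: nat and r :: int
  assumes "i < p"
  shows "int p dvd r - int i \<longleftrightarrow> i = nat (r mod int p)"
proof -
  have "int p dvd r - int i \<longleftrightarrow> r mod int p = int i mod int p"
    by (simp add: mod_eq_dvd_iff)
  also have "int i mod int p = int i"
    using assms by simp
  finally show ?thesis
    using assms by auto
qed

lemma sum_if_int_dvd_diff:
  fixes p m :: nat and r :: int
  assumes "m < p"
  shows "(\<Sum>i\<le>m. if int p dvd r - int i then g i else 0)
           = (if nat (r mod int p) \<le> m then g (nat (r mod int p)) else 0)"
proof -
  have "(\<Sum>i\<le>m. if int p dvd r - int i then g i else 0)
          = (\<Sum>i\<le>m. if i = nat (r mod int p) then g i else 0)"
    using assms by (intro sum.cong refl) (simp add: int_dvd_diff_iff_eq_mod)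
  then show ?thesis
    by (simp add: sum.delta')
qed

definition ffact :: "'a::comm_ring_1 \<Rightarrow> nat \<Rightarrow> 'a" where
  "ffact a l = (\<Prod>i<l. a - of_nat i)"

lemma fact_mult_gchoose: "fact l * (a gchoose l) = ffact (a :: 'a::field_char_0) l"
  by (simp add: gbinomial_prod_rev ffact_def atLeast0LessThan)

lemma of_int_ffact: "of_int (ffact y l) = ffact (of_int y) l"
  by (simp add: ffact_def)

section \<open>Legendre's formula and Fleck's congruence\<close>

locale prime_modulus =
  fixes p :: nat
  assumes prime_p: "prime p"
begin

lemma p_gt_1: "p > 1"
  using prime_p prime_gt_1_nat by blast

definition vfact :: "nat \<Rightarrow> nat" where
  "vfact n = multiplicity p (fact n :: nat)"

lemma vfact_0 [simp]: "vfact 0 = 0"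
  by (simp add: vfact_def)

lemma vfact_Suc: "vfact (Suc n) = vfact n + multiplicity p (Suc n)"
proof -
  have "multiplicity p (Suc n * fact n :: nat) = multiplicity p (Suc n) + multiplicity p (fact n :: nat)"
    using prime_p by (intro prime_elem_multiplicity_mult_distrib) auto
  then show ?thesis
    by (simp add: vfact_def)
qed

lemma vfact_choose:
  assumes "j \<le> M"
  shows "vfact M = vfact j + vfact (M - j) + multiplicity p (M choose j)"
proof -
  have "fact M = (M choose j) * (fact j * fact (M - j) :: nat)"
    using binomial_fact_lemma[OF assms] by (simp add: algebra_simps)
  then have "multiplicity p (fact M :: nat)
               = multiplicity p (M choose j) + (multiplicity p (fact j :: nat) + multiplicity p (fact (M - j) :: nat))"
    using prime_p assms by (simp add: prime_elem_multiplicity_mult_distrib)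
  then show ?thesis
    by (simp add: vfact_def)
qed

lemma vfact_legendre: "vfact n = n div p + vfact (n div p)"
proof (induction n)
  case (Suc n)
  show ?case
  proof (cases "p dvd Suc n")
    case True
    then have div: "Suc n div p = Suc (n div p)"
      by (simp add: div_Suc)
    with True have "Suc n = p * Suc (n div p)"
      by (metis dvd_mult_div_cancel)
    then have "multiplicity p (Suc n) = Suc (multiplicity p (Suc (n div p)))"
      using p_gt_1 multiplicity_times_same[of "Suc (n div p)" p] by simp
    then show ?thesis
      using Suc.IH div by (simp add: vfact_Suc)
  next
    case False
    then have "Suc n div p = n div p"
      by (simp add: div_Suc dvd_eq_mod_eq_0)
    moreover have "multiplicity p (Suc n) = 0"
      using False by (rule not_dvd_imp_multiplicity_0)
    ultimately show ?thesis
      using Suc.IH by (simp add: vfact_Suc)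
  qed
qed simp

lemma vfact_mult_le: "vfact n * (p - 1) \<le> n - 1"
proof (induction n rule: less_induct)
  case (less n)
  show ?case
  proof (cases "n div p = 0")
    case True
    then show ?thesis
      using vfact_legendre[of n] by simp
  next
    case False
    then have "n div p < n"
      by (metis div_0 div_less_dividend neq0_conv p_gt_1)
    then have IH: "vfact (n div p) * (p - 1) \<le> n div p - 1"
      by (rule less.IH)
    have "vfact n * (p - 1) = (n div p) * (p - 1) + vfact (n div p) * (p - 1)"
      by (subst vfact_legendre) (simp add: algebra_simps)
    also have "\<dots> \<le> (n div p) * (p - 1) + (n div p - 1)"
      using IH by simp
    also have "\<dots> = p * (n div p) - 1"
      using False p_gt_1 by (cases p) (auto simp: algebra_simps)
    also have "\<dots> \<le> n - 1"
      using minus_mod_eq_mult_div[of n p] by simp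
    finally show ?thesis .
  qed
qed

lemma vfact_le: "vfact n \<le> n - 1"
proof -
  have "vfact n * 1 \<le> vfact n * (p - 1)"
    using p_gt_1 by (intro mult_le_mono2) simp
  then show ?thesis
    using vfact_mult_le[of n] by linarith
qed

lemma vfact_div_power_mono:
  assumes "a \<le> b"
  shows "vfact a + vfact (b div p ^ k) \<le> vfact b + vfact (a div p ^ k)"
  using assms
proof (induction k arbitrary: a b)
  case (Suc k)
  have "a div p \<le> b div p"
    using Suc.prems by (rule div_le_mono)
  then have "vfact (a div p) + vfact (b div p div p ^ k) \<le> vfact (b div p) + vfact (a div p div p ^ k)"
    by (rule Suc.IH)
  then show ?case
    using vfact_legendre[of a] vfact_legendre[of b] \<open>a div p \<le> b div p\<close> by (simp add: div_mult2_eq)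
qed simp

lemma vfact_div_power_choose:
  assumes "1 \<le> j" and "j \<le> M"
  shows "vfact (M div p ^ k) + 1 \<le> vfact ((M - j) div p ^ k) + multiplicity p (M choose j) + j"
proof -
  have "vfact (M - j) + vfact (M div p ^ k) \<le> vfact M + vfact ((M - j) div p ^ k)"
    by (rule vfact_div_power_mono) simp
  moreover have "vfact M = vfact j + vfact (M - j) + multiplicity p (M choose j)"
    using assms(2) by (rule vfact_choose)
  moreover have "vfact j \<le> j - 1"
    by (rule vfact_le)
  ultimately show ?thesis
    using assms by linarith
qed

definition cong_ind :: "int \<Rightarrow> int \<Rightarrow> int" where
  "cong_ind t x = (if int p dvd x - t then 1 else 0)"

definition fleck_sum :: "nat \<Rightarrow> int \<Rightarrow> int" where
  "fleck_sum M t = (\<Sum>k\<le>M. int (M choose k) * (-1) ^ k * cong_ind t (int k))"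

lemma shift_apply_cong_ind:
  "shift_apply ((1 - monom 1 1) ^ M) (cong_ind t) x = fleck_sum M (t - x)"
  unfolding shift_apply_one_minus_monom_power fleck_sum_def cong_ind_def
  by (intro sum.cong refl) (simp add: algebra_simps)

lemma binomial_pred_prime_cong: "i \<le> p - 1 \<Longrightarrow> int p dvd int ((p - 1) choose i) * (-1) ^ i - 1"
proof (induction i)
  case (Suc i)
  have "p choose Suc i = ((p - 1) choose i) + ((p - 1) choose Suc i)"
    using p_gt_1 by (metis Suc_diff_1 binomial_Suc_Suc zero_less_one order.strict_trans)
  then have eq: "int ((p - 1) choose Suc i) * (-1) ^ Suc i - 1
                   = (int ((p - 1) choose i) * (-1) ^ i - 1) - int (p choose Suc i) * (-1) ^ i"
    by (simp add: algebra_simps)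
  have "p dvd p choose Suc i"
    using Suc.prems p_gt_1 prime_p by (intro dvd_choose_prime) auto
  then have "int p dvd int (p choose Suc i) * (-1) ^ i"
    by (simp add: int_dvd_int_iff)
  then show ?case
    unfolding eq using Suc by (intro dvd_diff[of _ "_ - 1"]) auto
qed simp

lemma sum_cong_ind: "(\<Sum>i\<le>p - 1. cong_ind (t - int i) x) = 1"
proof -
  have "cong_ind (t - int i) x = (if int p dvd (t - x) - int i then 1 else 0)" for i
  proof -
    have "x - (t - int i) = - ((t - x) - int i)"
      by simp
    then show ?thesis
      unfolding cong_ind_def by (simp only: dvd_minus_iff)
  qed
  moreover have "nat ((t - x) mod int p) \<le> p - 1"
    using p_gt_1 pos_mod_bound[of "int p" "t - x"] by (simp add: nat_le_iff of_nat_diff)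
  ultimately show ?thesis
    using p_gt_1 by (simp add: sum_if_int_dvd_diff)
qed

lemma sum_fleck_sum_eq_0:
  assumes "M \<ge> 1"
  shows "(\<Sum>i\<le>p - 1. fleck_sum M (t - int i)) = 0"
proof -
  have "(\<Sum>i\<le>p - 1. fleck_sum M (t - int i))
          = (\<Sum>k\<le>M. int (M choose k) * (-1) ^ k * (\<Sum>i\<le>p - 1. cong_ind (t - int i) (int k)))"
    unfolding fleck_sum_def by (subst sum.swap) (simp add: sum_distrib_left)
  also have "\<dots> = (\<Sum>k\<le>M. int (M choose k) * (-1) ^ k)"
    by (simp only: sum_cong_ind mult_1_right)
  also have "\<dots> = 0"
    using choose_alternating_sum[of M] assms by (simp add: mult.commute)
  finally show ?thesis .
qed

text \<open>Modulo p, (1 - E)^(p - 1) agrees with 1 + E + ... + E^(p - 1), which annihilates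
  fleck_sum n for n \<ge> 1.\<close>

lemma fleck_sum_recurrence:
  assumes "n \<ge> 1"
  shows "fleck_sum (p - 1 + n) t
           = (\<Sum>i\<le>p - 1. (int ((p - 1) choose i) * (-1) ^ i - 1) * fleck_sum n (t - int i))"
proof -
  have "fleck_sum (p - 1 + n) t = shift_apply ((1 - monom 1 1) ^ (p - 1) * (1 - monom 1 1) ^ n) (cong_ind t) 0"
    using shift_apply_cong_ind[of "p - 1 + n" t 0] by (simp add: power_add)
  also have "\<dots> = shift_apply ((1 - monom 1 1) ^ (p - 1)) (\<lambda>x. fleck_sum n (t - x)) 0"
    unfolding shift_apply_mult shift_apply_cong_ind ..
  also have "\<dots> = (\<Sum>i\<le>p - 1. int ((p - 1) choose i) * (-1) ^ i * fleck_sum n (t - int i))"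
    by (simp add: shift_apply_one_minus_monom_power)
  also have "\<dots> = (\<Sum>i\<le>p - 1. (int ((p - 1) choose i) * (-1) ^ i - 1) * fleck_sum n (t - int i))"
    using sum_fleck_sum_eq_0[OF assms, of t] by (simp add: algebra_simps sum_subtractf)
  finally show ?thesis .
qed

theorem fleck_congruence: "M \<ge> 1 \<Longrightarrow> int p ^ ((M - 1) div (p - 1)) dvd fleck_sum M t"
proof (induction M arbitrary: t rule: less_induct)
  case (less M)
  show ?case
  proof (cases "M < p")
    case True
    then have "(M - 1) div (p - 1) = 0"
      using less.prems by (intro div_less) auto
    then show ?thesis
      by simp
  next
    case False
    define n where "n = M - (p - 1)"
    have n: "n \<ge> 1" "n < M" "M = p - 1 + n"
      using False less.prems p_gt_1 by (auto simp: n_def)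
    have "M - 1 = (n - 1) + (p - 1)"
      using n by simp
    then have "(M - 1) div (p - 1) = Suc ((n - 1) div (p - 1))"
      using p_gt_1 by (simp only: div_add_self2)
    moreover have "int p * int p ^ ((n - 1) div (p - 1)) dvd fleck_sum M t"
      unfolding n(3) fleck_sum_recurrence[OF n(1)]
      by (intro dvd_sum mult_dvd_mono binomial_pred_prime_cong less.IH n) auto
    ultimately show ?thesis
      by simp
  qed
qed

lemma vfact_dvd_fleck_sum: "int p ^ vfact M dvd fleck_sum M t"
proof (cases "M = 0")
  case False
  have "vfact M \<le> (M - 1) div (p - 1)"
    using vfact_mult_le[of M] p_gt_1 by (simp add: less_eq_div_iff_mult_less_eq)
  then have "int p ^ vfact M dvd int p ^ ((M - 1) div (p - 1))"
    by (rule le_imp_power_dvd)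
  then show ?thesis
    using fleck_congruence[of M t] False by (auto intro: dvd_trans)
qed simp

section \<open>The numerator of T\<close>

definition step_ffact :: "int \<Rightarrow> nat \<Rightarrow> int \<Rightarrow> int" where
  "step_ffact c l x = (\<Prod>i<l. x - c - int p * int i)"

definition fleck_sum_ffact :: "nat \<Rightarrow> int \<Rightarrow> int \<Rightarrow> nat \<Rightarrow> int" where
  "fleck_sum_ffact M t c l
     = (\<Sum>k\<le>M. int (M choose k) * (-1) ^ k * (cong_ind t (int k) * step_ffact c l (int k)))"

lemma step_ffact_Suc: "step_ffact c (Suc l) x = (x - c) * step_ffact (c + int p) l x"
  unfolding step_ffact_def by (subst prod.lessThan_Suc_shift) (simp add: algebra_simps)

lemma fleck_sum_ffact_Suc:
  "fleck_sum_ffact M t c (Suc l)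
     = (\<Sum>k\<le>M. int (M choose k) * (-1) ^ k * int k * (cong_ind t (int k) * step_ffact (c + int p) l (int k)))
       - c * fleck_sum_ffact M t (c + int p) l"
  unfolding fleck_sum_ffact_def step_ffact_Suc
  by (simp add: sum_distrib_left sum_subtractf[symmetric] algebra_simps)

lemma vfact_dvd_fleck_sum_ffact: "int p ^ vfact M dvd fleck_sum_ffact M t c l"
proof (induction l arbitrary: M t c)
  case 0
  show ?case
    using vfact_dvd_fleck_sum by (simp add: fleck_sum_ffact_def fleck_sum_def step_ffact_def)
next
  case (Suc l)
  have "int p ^ vfact M dvd
          (\<Sum>k\<le>M. int (M choose k) * (-1) ^ k * int k * (cong_ind t (int k) * step_ffact (c + int p) l (int k)))"
  proof (cases M)
    case (Suc M')
    have eq: "(\<Sum>k\<le>M. int (M choose k) * (-1) ^ k * int k * (cong_ind t (int k) * step_ffact (c + int p) l (int k)))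
                = - (int M * fleck_sum_ffact M' (t - 1) (c + int p - 1) l)"
      unfolding Suc sum_binomial_times_index fleck_sum_ffact_def
      by (simp add: cong_ind_def step_ffact_def algebra_simps)
    have "int p ^ multiplicity p M dvd int M"
      by (metis multiplicity_dvd of_nat_dvd_iff of_nat_power)
    then have "int p ^ (multiplicity p M + vfact M') dvd int M * fleck_sum_ffact M' (t - 1) (c + int p - 1) l"
      unfolding power_add using Suc.IH by (rule mult_dvd_mono)
    moreover have "vfact M = multiplicity p M + vfact M'"
      using Suc vfact_Suc by simp
    ultimately show ?thesis
      unfolding eq by simp
  qed simp
  then show ?case
    using Suc.IH by (simp add: fleck_sum_ffact_Suc)
qed

definition Tterm :: "nat \<Rightarrow> nat \<Rightarrow> int \<Rightarrow> int \<Rightarrow> int" where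
  "Tterm l \<beta> r x = (if int p ^ \<beta> dvd x - r then int p ^ l * ffact ((x - r) div int p ^ \<beta>) l else 0)"

definition Tnum :: "nat \<Rightarrow> nat \<Rightarrow> nat \<Rightarrow> int \<Rightarrow> int" where
  "Tnum l \<beta> n r = shift_apply ((1 - monom 1 1) ^ n) (Tterm l \<beta> r) 0"

lemma Tnum_eq_sum: "Tnum l \<beta> n r = (\<Sum>k\<le>n. int (n choose k) * (-1) ^ k * Tterm l \<beta> r (int k))"
  unfolding Tnum_def shift_apply_one_minus_monom_power by simp

lemma T_eq_Tnum: "T p l \<beta> n r = of_int (Tnum l \<beta> n r) / of_nat (fact (n div p ^ (\<beta> - 1)))"
proof -
  let ?K = "{k. k \<le> n \<and> int k mod int p ^ \<beta> = r mod int p ^ \<beta>}"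
  define f where "f k = of_nat (n choose k) * (-1) ^ k * ((of_int ((int k - r) div int p ^ \<beta>) :: rat) gchoose l)" for k
  have "?K = {k \<in> {..n}. int p ^ \<beta> dvd int k - r}"
    by (auto simp: mod_eq_dvd_iff)
  then have "(\<Sum>k\<in>?K. f k) = (\<Sum>k\<le>n. if int p ^ \<beta> dvd int k - r then f k else 0)"
    by (simp only: sum.inter_filter finite_atMost)
  moreover have "of_nat (fact l) * of_nat p ^ l * (if int p ^ \<beta> dvd int k - r then f k else 0)
                   = of_int (int (n choose k) * (-1) ^ k * Tterm l \<beta> r (int k))" for k
    by (simp add: f_def Tterm_def of_int_ffact fact_mult_gchoose[symmetric])
  ultimately have "of_nat (fact l) * of_nat p ^ l * (\<Sum>k\<in>?K. f k) = (of_int (Tnum l \<beta> n r) :: rat)"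
    by (simp add: sum_distrib_left Tnum_eq_sum)
  then show ?thesis
    unfolding T_def f_def by (simp add: field_simps)
qed

lemma Tnum_one: "Tnum l 1 n t = fleck_sum_ffact n t t l"
proof -
  have "Tterm l 1 t x = cong_ind t x * step_ffact t l x" for x
  proof (cases "int p dvd x - t")
    case True
    then obtain y where y: "x - t = int p * y" ..
    have "int p ^ l * ffact y l = (\<Prod>i<l. int p * (y - int i))"
      by (simp add: ffact_def prod.distrib)
    also have "\<dots> = step_ffact t l x"
      unfolding step_ffact_def using y by (intro prod.cong refl) (simp add: algebra_simps)
    finally show ?thesis
      using True y p_gt_1 by (simp add: Tterm_def cong_ind_def)
  qed (simp add: Tterm_def cong_ind_def)
  then show ?thesis
    by (simp add: Tnum_eq_sum fleck_sum_ffact_def)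
qed

lemma shift_apply_Tterm: "shift_apply ((1 - monom 1 1) ^ n) (Tterm l \<beta> r) x = Tnum l \<beta> n (r - x)"
proof -
  have "shift_apply ((1 - monom 1 1) ^ n) (Tterm l \<beta> r) (0 + x)
          = shift_apply ((1 - monom 1 1) ^ n) (\<lambda>z. Tterm l \<beta> r (z + x)) 0"
    by (rule shift_apply_translate)
  moreover have "(\<lambda>z. Tterm l \<beta> r (z + x)) = Tterm l \<beta> (r - x)"
    by (simp add: Tterm_def fun_eq_iff algebra_simps)
  ultimately show ?thesis
    by (simp add: Tnum_def)
qed

lemma Tnum_eq_sum_mod:
  "Tnum l \<beta> n r = (\<Sum>i\<le>n mod p. int (n mod p choose i) * (-1) ^ i * Tnum l \<beta> (p * (n div p)) (r - int i))"
proof -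
  have "(1 - monom 1 1) ^ n = (1 - monom 1 1) ^ (n mod p) * (1 - monom (1::int) 1) ^ (p * (n div p))"
    by (simp flip: power_add)
  then have "Tnum l \<beta> n r = shift_apply ((1 - monom 1 1) ^ (n mod p))
                                (shift_apply ((1 - monom 1 1) ^ (p * (n div p))) (Tterm l \<beta> r)) 0"
    by (simp only: Tnum_def shift_apply_mult)
  also have "\<dots> = (\<Sum>i\<le>n mod p. int (n mod p choose i) * (-1) ^ i
                      * shift_apply ((1 - monom 1 1) ^ (p * (n div p))) (Tterm l \<beta> r) (0 + int (1 * i)))"
    by (rule shift_apply_one_minus_monom_power)
  finally show ?thesis
    unfolding shift_apply_Tterm by simp
qed

section \<open>From beta to beta + 1\<close>

lemma Tterm_Suc:
  "Tterm l (Suc \<beta>) s (x + int p * int k)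
     = (if int p dvd s - x then Tterm l \<beta> ((s - x) div int p) (int k) else 0)"
proof (cases "int p dvd s - x")
  case True
  then obtain u where u: "s - x = int p * u" ..
  have "x + int p * int k - s = int p * (int k - u)"
    using u by (simp add: algebra_simps)
  moreover have "int p \<noteq> 0"
    using p_gt_1 by simp
  ultimately show ?thesis
    using True u by (simp add: Tterm_def power_Suc div_mult_mult1)
next
  case False
  have "\<not> int p dvd x + int p * int k - s"
  proof
    assume "int p dvd x + int p * int k - s"
    then have "int p dvd (x + int p * int k - s) - int p * int k"
      by (rule dvd_diff) simp
    with False show False
      by (simp add: dvd_diff_commute)
  qed
  then have "\<not> int p ^ Suc \<beta> dvd x + int p * int k - s"
    unfolding power_Suc using dvd_mult_left by blast
  with False show ?thesis
    by (simp add: Tterm_def)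
qed

lemma shift_apply_Tterm_Suc:
  "shift_apply ((1 - monom 1 p) ^ n) (Tterm l (Suc \<beta>) s)
     = (\<lambda>x. if int p dvd s - x then Tnum l \<beta> n ((s - x) div int p) else 0)"
  by (simp add: fun_eq_iff shift_apply_one_minus_monom_power Tterm_Suc Tnum_eq_sum)

definition frobenius_defect :: "int poly" where
  "frobenius_defect = (1 - monom 1 1) ^ p - (1 - monom 1 p)"

lemma frobenius_defect_coeff_dvd: "int p dvd coeff frobenius_defect i"
proof -
  have coeff: "coeff frobenius_defect i
                 = int (p choose i) * (-1) ^ i - ((if i = 0 then 1 else 0) - (if i = p then 1 else 0))"
    unfolding frobenius_defect_def coeff_diff coeff_one_minus_X_power by (simp add: coeff_monom coeff_1)
  consider "i = 0" | "i = p" | "0 < i \<and> i < p" | "i > p"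
    using p_gt_1 by linarith
  then show ?thesis
  proof cases
    case 2
    have "int p dvd (-1) ^ p + 1"
    proof (cases "p = 2")
      case False
      then have "odd p"
        using p_gt_1 prime_p prime_odd_nat by simp
      then show ?thesis
        by simp
    qed simp
    then show ?thesis
      unfolding coeff using 2 p_gt_1 by simp
  next
    case 3
    then have "p dvd p choose i"
      using prime_p by (intro dvd_choose_prime) auto
    then show ?thesis
      unfolding coeff using 3 by (simp add: int_dvd_int_iff)
  qed (unfold coeff, use p_gt_1 in \<open>simp_all add: binomial_eq_0\<close>)
qed

lemma Tnum_Suc_p_times:
  "Tnum l (Suc \<beta>) (p * m) s
     = (\<Sum>j\<le>m. int (m choose j) * shift_apply (frobenius_defect ^ j)
                  (\<lambda>y. if int p dvd s - y then Tnum l \<beta> (m - j) ((s - y) div int p) else 0) 0)"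
proof -
  have "(1 - monom 1 1) ^ (p * m) = (frobenius_defect + (1 - monom 1 p)) ^ m"
    by (simp add: frobenius_defect_def power_mult)
  also have "\<dots> = (\<Sum>j\<le>m. of_nat (m choose j) * frobenius_defect ^ j * (1 - monom 1 p) ^ (m - j))"
    by (rule binomial_ring)
  finally show ?thesis
    by (simp add: Tnum_def shift_apply_sum of_nat_poly shift_apply_smult shift_apply_mult
        shift_apply_Tterm_Suc mult.assoc)
qed

lemma Tnum_Suc_p_times_cong:
  assumes IH: "\<And>n r. int p ^ vfact (n div p ^ k) dvd Tnum l \<beta> n r"
  shows "int p ^ (vfact (m div p ^ k) + 1)
           dvd Tnum l (Suc \<beta>) (p * m) s - (if int p dvd s then Tnum l \<beta> m (s div int p) else 0)"
proof -
  define G where "G j y = (if int p dvd s - y then Tnum l \<beta> (m - j) ((s - y) div int p) else 0)" for j y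
  define t where "t j = int (m choose j) * shift_apply (frobenius_defect ^ j) (G j) 0" for j
  have "Tnum l (Suc \<beta>) (p * m) s = t 0 + (\<Sum>j<m. t (Suc j))"
    unfolding Tnum_Suc_p_times t_def G_def by (rule sum.atMost_shift)
  moreover have "t 0 = (if int p dvd s then Tnum l \<beta> m (s div int p) else 0)"
    by (simp add: t_def G_def)
  moreover have "int p ^ (vfact (m div p ^ k) + 1) dvd (\<Sum>j<m. t (Suc j))"
  proof (rule dvd_sum)
    fix j
    assume "j \<in> {..<m}"
    let ?e = "vfact ((m - Suc j) div p ^ k)" and ?c = "multiplicity p (m choose Suc j)"
    have "int p ^ ?c dvd int (m choose Suc j)"
      by (metis multiplicity_dvd of_nat_dvd_iff of_nat_power)
    moreover have "int p ^ Suc j * int p ^ ?e dvd shift_apply (frobenius_defect ^ Suc j) (G (Suc j)) 0"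
      using IH by (intro shift_apply_dvd coeff_power_dvd frobenius_defect_coeff_dvd) (simp add: G_def)
    ultimately have "int p ^ ?c * (int p ^ Suc j * int p ^ ?e) dvd t (Suc j)"
      unfolding t_def by (rule mult_dvd_mono)
    then have "int p ^ (?c + Suc j + ?e) dvd t (Suc j)"
      by (simp only: power_add mult.assoc)
    moreover have "vfact (m div p ^ k) + 1 \<le> ?c + Suc j + ?e"
      using vfact_div_power_choose[of "Suc j" m k] \<open>j \<in> {..<m}\<close> by simp
    ultimately show "int p ^ (vfact (m div p ^ k) + 1) dvd t (Suc j)"
      by (meson dvd_trans le_imp_power_dvd)
  qed
  ultimately show ?thesis
    by simp
qed

lemma Tnum_Suc_cong:
  assumes IH: "\<And>n r. int p ^ vfact (n div p ^ k) dvd Tnum l \<beta> n r"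
  shows "int p ^ (vfact (n div p ^ Suc k) + 1) dvd
           Tnum l (Suc \<beta>) n r
           - (-1) ^ nat (r mod int p) * int (n mod p choose nat (r mod int p)) * Tnum l \<beta> (n div p) (r div int p)"
proof -
  define D where "D i = Tnum l (Suc \<beta>) (p * (n div p)) (r - int i)
                          - (if int p dvd r - int i then Tnum l \<beta> (n div p) ((r - int i) div int p) else 0)" for i
  have "(\<Sum>i\<le>n mod p. int (n mod p choose i) * (-1) ^ i
            * (if int p dvd r - int i then Tnum l \<beta> (n div p) ((r - int i) div int p) else 0))
          = (-1) ^ nat (r mod int p) * int (n mod p choose nat (r mod int p)) * Tnum l \<beta> (n div p) (r div int p)"
  proof -
    have "(r - r mod int p) div int p = r div int p"
      by (simp add: minus_mod_eq_mult_div)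
    moreover have "nat (r mod int p) > n mod p \<Longrightarrow> n mod p choose nat (r mod int p) = 0"
      by simp
    ultimately show ?thesis
      using p_gt_1 by (simp add: if_distrib sum_if_int_dvd_diff cong: if_cong)
  qed
  then have "Tnum l (Suc \<beta>) n r
               - (-1) ^ nat (r mod int p) * int (n mod p choose nat (r mod int p)) * Tnum l \<beta> (n div p) (r div int p)
             = (\<Sum>i\<le>n mod p. int (n mod p choose i) * (-1) ^ i * D i)"
    by (subst Tnum_eq_sum_mod) (simp add: D_def algebra_simps sum_subtractf)
  moreover have "int p ^ (vfact (n div p ^ Suc k) + 1) dvd D i" for i
    using Tnum_Suc_p_times_cong[OF IH, of "n div p" "r - int i"] by (simp add: D_def div_mult2_eq)
  ultimately show ?thesis
    by (simp add: dvd_sum)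
qed

theorem Tnum_p_integral: "int p ^ vfact (n div p ^ \<beta>) dvd Tnum l (Suc \<beta>) n r"
proof (induction \<beta> arbitrary: n r)
  case 0
  show ?case
    using Tnum_one[of l n r] vfact_dvd_fleck_sum_ffact[of n r r l] by (simp add: One_nat_def)
next
  case (Suc \<beta>)
  let ?c = "(-1) ^ nat (r mod int p) * int (n mod p choose nat (r mod int p))"
  let ?e = "vfact (n div p ^ Suc \<beta>)"
  have "int p ^ ?e dvd int p ^ (?e + 1)"
    by (rule le_imp_power_dvd) simp
  then have "int p ^ ?e dvd Tnum l (Suc (Suc \<beta>)) n r - ?c * Tnum l (Suc \<beta>) (n div p) (r div int p)"
    using Tnum_Suc_cong[OF Suc.IH, of n r] by (rule dvd_trans)
  moreover have "n div p ^ Suc \<beta> = n div p div p ^ \<beta>"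
    by (simp add: div_mult2_eq)
  then have "int p ^ ?e dvd ?c * Tnum l (Suc \<beta>) (n div p) (r div int p)"
    using Suc.IH by (intro dvd_mult) simp
  ultimately show ?case
    by (metis diff_add_cancel dvd_add)
qed

end

lemma qcong_divide:
  fixes x y :: int and p m a :: nat
  assumes "prime p" and "m \<noteq> 0" and "int p ^ (multiplicity p m + a) dvd x - y"
  shows "qcong (of_int x / of_nat m) (of_int y / of_nat m) p a"
proof -
  have "\<not> is_unit p"
    using prime_gt_1_nat[OF assms(1)] by simp
  then obtain w where m: "m = p ^ multiplicity p m * w" and w: "\<not> p dvd w"
    using multiplicity_decompose'[OF assms(2)] by blast
  obtain z where z: "x - y = int p ^ (multiplicity p m + a) * z"
    using assms(3) by (elim dvdE)
  have "w \<noteq> 0"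
    using m assms(2) by (metis mult_0_right)
  have "p \<noteq> 0"
    using assms(1) by auto
  have "of_int x - of_int y = (of_int z * of_nat p ^ (multiplicity p m + a) :: rat)"
    using arg_cong[where f = "of_int :: int \<Rightarrow> rat", OF z] by simp
  then have "of_int x / of_nat m - of_int y / of_nat m
               = (of_int z * of_nat p ^ (multiplicity p m + a) / (of_nat p ^ multiplicity p m * of_nat w) :: rat)"
    by (subst (1 2) m) (simp add: diff_divide_distrib[symmetric])
  also have "\<dots> = of_int (int p ^ a * z) / of_int (int w)"
    using \<open>p \<noteq> 0\<close> by (simp add: power_add field_simps)
  finally have "of_int x / of_nat m - of_int y / of_nat m = (of_int (int p ^ a * z) / of_int (int w) :: rat)" .
  then show ?thesis
    unfolding qcong_def using w \<open>w \<noteq> 0\<close> by (intro exI[of _ "int p ^ a * z"] exI[of _ "int w"]) auto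
qed

theorem theorem1p5:
  fixes p \<alpha> l n :: nat and r :: int
  assumes "prime p" and "\<alpha> \<ge> 2"
  shows "qcong (T p l (\<alpha> + 1) n r)
                ((-1) ^ nat (r mod int p) * of_nat ((n mod p) choose nat (r mod int p))
                   * T p l \<alpha> (n div p) (r div int p)) p 1"
proof -
  interpret prime_modulus p
    using assms(1) by unfold_locales
  obtain k where \<alpha>: "\<alpha> = Suc k"
    using assms(2) by (cases \<alpha>) auto
  let ?c = "(-1) ^ nat (r mod int p) * int (n mod p choose nat (r mod int p))"
  let ?N = "n div p ^ \<alpha>"
  have "int p ^ (multiplicity p (fact ?N) + 1) dvd
          Tnum l (Suc \<alpha>) n r - ?c * Tnum l \<alpha> (n div p) (r div int p)"
    unfolding \<alpha> using Tnum_Suc_cong[OF Tnum_p_integral] by (simp add: vfact_def)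
  then have "qcong (of_int (Tnum l (Suc \<alpha>) n r) / of_nat (fact ?N))
                   (of_int (?c * Tnum l \<alpha> (n div p) (r div int p)) / of_nat (fact ?N)) p 1"
    by (intro qcong_divide assms(1)) simp_all
  moreover have "n div p div p ^ (\<alpha> - 1) = ?N"
    by (simp add: \<alpha> div_mult2_eq)
  ultimately show ?thesis
    by (simp add: T_eq_Tnum)
qed

end
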